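(* Let $L$ be the digraph with vertex set $\mathbb{Z}\times\{-1,0,1\}$ in which $((i,x),(j,y))$ is an edge if and only if $j=i+1$ and either $i$ is even, or $i$ is odd and $x+y\neq 0$. Let $\varphi^1,\varphi^2:V(L)\to\mathbb{Z}$ be given by $\varphi^1((i,x))=i$ and $\varphi^2((i,x))=i+1$. Then the layerwise direct product $D=L\,{}_{\varphi^1}\!\!\times_{\varphi^2}L$ is highly arc transitive.
   Context: The integer-line digraph is $Z=(\mathbb{Z},\{(i,i+1)\mid i\in\mathbb{Z}\})$; $\varphi^1,\varphi^2$ are epimorphisms $L\to Z$. For digraphs $G^1=(V^1,E^1)$, $G^2=(V^2,E^2)$ with epimorphisms $\varphi^1:G^1\to Z$, $\varphi^2:G^2\to Z$, the layerwise direct product $G^1\,{}_{\varphi^1}\!\!\times_{\varphi^2}G^2$ is the digraph with vertex set $\{(x,y)\mid x\in V^1,y\in V^2,\varphi^1(x)=\varphi^2(y)\}$ and edge set $\{((a,b),(x,y))\mid (a,x)\in E^1,(b,y)\in E^2\}$. An $n$-arc is a sequence of directed edges $e_0,\dots,e_{n-1}$ with the terminal vertex of $e_i$ equal to the initial vertex of $e_{i+1}$. A digraph is highly arc transitive if for every $n\in\mathbb{N}$ its automorphism group acts transitively on its (nonempty set of) $n$-arcs. *)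

theory Defs
  imports Main
begin

type_synonym 'a digraph = "'a set \<times> ('a \<times> 'a) set"

definition verts :: "'a digraph \<Rightarrow> 'a set" where "verts G = fst G"
definition edges :: "'a digraph \<Rightarrow> ('a \<times> 'a) set" where "edges G = snd G"

definition layerwise_prod ::
  "'a digraph \<Rightarrow> ('a \<Rightarrow> int) \<Rightarrow> 'b digraph \<Rightarrow> ('b \<Rightarrow> int) \<Rightarrow> ('a \<times> 'b) digraph" where
  "layerwise_prod G1 phi1 G2 phi2 =
     (let V = {(x, y). x \<in> verts G1 \<and> y \<in> verts G2 \<and> phi1 x = phi2 y}
      in (V, {((a, b), (x, y)). (a, b) \<in> V \<and> (x, y) \<in> V \<and>
                                 (a, x) \<in> edges G1 \<and> (b, y) \<in> edges G2}))"

definition arcs :: "'a digraph \<Rightarrow> nat \<Rightarrow> ('a \<times> 'a) list set" where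
  "arcs G n = {es. length es = n \<and> set es \<subseteq> edges G \<and>
                   (\<forall>i. Suc i < n \<longrightarrow> snd (es ! i) = fst (es ! Suc i))}"

definition automorphisms :: "'a digraph \<Rightarrow> ('a \<Rightarrow> 'a) set" where
  "automorphisms G = {f. bij_betw f (verts G) (verts G) \<and>
      (\<forall>a\<in>verts G. \<forall>b\<in>verts G. (a, b) \<in> edges G \<longleftrightarrow> (f a, f b) \<in> edges G)}"

definition highly_arc_transitive :: "'a digraph \<Rightarrow> bool" where
  "highly_arc_transitive G \<longleftrightarrow>
     (\<forall>n. arcs G n \<noteq> {} \<and>
          (\<forall>A\<in>arcs G n. \<forall>B\<in>arcs G n. \<exists>f\<in>automorphisms G.
              map (\<lambda>(u, v). (f u, f v)) A = B))"

definition L :: "(int \<times> int) digraph" where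
  "L = ({(i, x). x \<in> {-1, 0, 1}},
        {((i, x), (j, y)). x \<in> {-1, 0, 1} \<and> y \<in> {-1, 0, 1} \<and> j = i + 1 \<and>
                            (even i \<or> (odd i \<and> x + y \<noteq> 0))})"

definition phi1 :: "int \<times> int \<Rightarrow> int" where "phi1 v = fst v"
definition phi2 :: "int \<times> int \<Rightarrow> int" where "phi2 v = fst v + 1"

end

theory Submission
  imports Defs "HOL-Combinatorics.Permutations"
begin

text \<open>A vertex ((i, x), (i - 1, y)) of D carries two labels, one from each factor; the one coming
from the odd layer of L restricts the edges leaving the vertex, the other one restricts the edges
entering it. Recording them as an out-colour and an in-colour, D becomes the digraph on
\<open>\<int> \<times> C \<times> C\<close> with colours C = {-1, 0, 1}, where an edge joins consecutive layers exactly when the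
out-colour of its tail differs from the in-colour of its head. Shifting the layers and permuting the
colours independently on each gap between consecutive layers gives automorphisms of this digraph.
An arc prescribes on each gap either two distinct colours, or (at its two ends) a single one, so
any two n-arcs can be matched gap by gap.\<close>

definition digraph_iso :: "('a \<Rightarrow> 'b) \<Rightarrow> 'a digraph \<Rightarrow> 'b digraph \<Rightarrow> bool" where
  "digraph_iso h G H \<longleftrightarrow> bij_betw h (verts G) (verts H) \<and>
     (\<forall>a\<in>verts G. \<forall>b\<in>verts G. (a, b) \<in> edges G \<longleftrightarrow> (h a, h b) \<in> edges H)"

abbreviation map_arc :: "('a \<Rightarrow> 'b) \<Rightarrow> ('a \<times> 'a) list \<Rightarrow> ('b \<times> 'b) list" where
  "map_arc f \<equiv> map (\<lambda>(u, v). (f u, f v))"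

lemma comp_edge_map [simp]:
  "(\<lambda>(u, v). (f u, f v)) \<circ> (\<lambda>(u, v). (g u, g v)) = (\<lambda>(u, v). (f (g u), f (g v)))"
  by auto

lemma automorphisms_iff_digraph_iso: "f \<in> automorphisms G \<longleftrightarrow> digraph_iso f G G"
  by (simp add: automorphisms_def digraph_iso_def)

lemma digraph_iso_inv:
  assumes "digraph_iso h G H"
  shows "digraph_iso (inv_into (verts G) h) H G"
proof -
  have bij: "bij_betw h (verts G) (verts H)" using assms by (simp add: digraph_iso_def)
  then have "bij_betw (inv_into (verts G) h) (verts H) (verts G)" by (rule bij_betw_inv_into)
  moreover have "(a, b) \<in> edges H \<longleftrightarrow> (inv_into (verts G) h a, inv_into (verts G) h b) \<in> edges G"
    if "a \<in> verts H" "b \<in> verts H" for a b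
    using assms that bij_betw_inv_into_right[OF bij] bij_betw_apply[OF bij_betw_inv_into[OF bij]]
    unfolding digraph_iso_def by metis
  ultimately show ?thesis by (simp add: digraph_iso_def)
qed

lemma digraph_iso_comp:
  assumes "digraph_iso f G H" and "digraph_iso g H K"
  shows "digraph_iso (g \<circ> f) G K"
  using assms bij_betw_trans bij_betw_apply unfolding digraph_iso_def comp_def by metis

lemma arcs_map_digraph_iso:
  assumes iso: "digraph_iso h G H" and G: "edges G \<subseteq> verts G \<times> verts G" and A: "A \<in> arcs G n"
  shows "map_arc h A \<in> arcs H n"
proof -
  have "(h u, h v) \<in> edges H" if "(u, v) \<in> edges G" for u v
    using that G iso by (auto simp: digraph_iso_def)
  then show ?thesis using A by (auto simp: arcs_def split: prod.splits)
qed

definition arc_vertex :: "('a \<times> 'a) list \<Rightarrow> nat \<Rightarrow> 'a" where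
  "arc_vertex A k = (if k = 0 then fst (A ! 0) else snd (A ! (k - 1)))"

lemma arcs_nth:
  assumes "A \<in> arcs G n" "k < n"
  shows "A ! k = (arc_vertex A k, arc_vertex A (Suc k))"
proof (cases k)
  case (Suc m)
  then have "snd (A ! m) = fst (A ! k)" using assms by (simp add: arcs_def)
  then show ?thesis using Suc by (simp add: arc_vertex_def prod_eq_iff)
qed (simp add: arc_vertex_def)

lemma arcs_arc_vertex_edge:
  assumes "A \<in> arcs G n" "k < n"
  shows "(arc_vertex A k, arc_vertex A (Suc k)) \<in> edges G"
  using assms arcs_nth[OF assms] nth_mem[of k A] by (auto simp: arcs_def)

lemma map_arc_eqI:
  assumes A: "A \<in> arcs G n" and B: "B \<in> arcs H n"
    and f: "\<And>k. k \<le> n \<Longrightarrow> f (arc_vertex A k) = arc_vertex B k"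
  shows "map_arc f A = B"
proof (rule nth_equalityI)
  show "length (map_arc f A) = length B" using A B by (simp add: arcs_def)
  fix k assume "k < length (map_arc f A)"
  then have "k < n" using A by (simp add: arcs_def)
  then show "map_arc f A ! k = B ! k"
    using A arcs_nth[OF A] arcs_nth[OF B] f[of k] f[of "Suc k"] by (simp add: arcs_def)
qed

lemma highly_arc_transitive_digraph_iso:
  assumes hat: "highly_arc_transitive G" and iso: "digraph_iso h G H"
    and G: "edges G \<subseteq> verts G \<times> verts G" and H: "edges H \<subseteq> verts H \<times> verts H"
  shows "highly_arc_transitive H"
  unfolding highly_arc_transitive_def
proof (intro allI conjI ballI)
  fix n
  obtain A where "A \<in> arcs G n" using hat unfolding highly_arc_transitive_def by blast
  then show "arcs H n \<noteq> {}" using arcs_map_digraph_iso[OF iso G] by blast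
  define h' where "h' = inv_into (verts G) h"
  have iso': "digraph_iso h' H G" unfolding h'_def using iso by (rule digraph_iso_inv)
  fix A B assume A: "A \<in> arcs H n" and B: "B \<in> arcs H n"
  obtain f where f: "f \<in> automorphisms G" and fAB: "map_arc f (map_arc h' A) = map_arc h' B"
    using hat arcs_map_digraph_iso[OF iso' H A] arcs_map_digraph_iso[OF iso' H B]
    unfolding highly_arc_transitive_def by blast
  have "digraph_iso (h \<circ> f \<circ> h') H H"
    using iso' f iso by (simp add: automorphisms_iff_digraph_iso digraph_iso_comp)
  moreover have "map_arc (h \<circ> f \<circ> h') A = B"
  proof -
    have "h (h' v) = v" if "v \<in> verts H" for v
      using that iso bij_betw_inv_into_right by (fastforce simp: digraph_iso_def h'_def)
    then have "map_arc (h \<circ> h') B = B" using B H by (auto simp: arcs_def intro!: map_idI)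
    then show ?thesis using arg_cong[OF fAB, of "map_arc h"] by simp
  qed
  ultimately show "\<exists>f\<in>automorphisms H. map_arc f A = B"
    by (metis automorphisms_iff_digraph_iso)
qed

text \<open>The vertex (i, a, b) lies on layer i and has in-colour a and out-colour b.\<close>

definition colour_mismatch_digraph :: "'c set \<Rightarrow> (int \<times> 'c \<times> 'c) digraph" where
  "colour_mismatch_digraph C =
     (UNIV \<times> C \<times> C,
      {((i, a, b), (j, a', b')). a \<in> C \<and> b \<in> C \<and> a' \<in> C \<and> b' \<in> C \<and> j = i + 1 \<and> b \<noteq> a'})"

lemma verts_colour_mismatch_digraph [simp]: "verts (colour_mismatch_digraph C) = UNIV \<times> C \<times> C"
  by (simp add: colour_mismatch_digraph_def verts_def)

lemma edges_colour_mismatch_digraph_iff [simp]: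
  "((i, a, b), (j, a', b')) \<in> edges (colour_mismatch_digraph C) \<longleftrightarrow>
     a \<in> C \<and> b \<in> C \<and> a' \<in> C \<and> b' \<in> C \<and> j = i + 1 \<and> b \<noteq> a'"
  by (simp add: colour_mismatch_digraph_def edges_def)

lemma edges_colour_mismatch_digraph:
  "(u, v) \<in> edges (colour_mismatch_digraph C) \<longleftrightarrow>
     snd u \<in> C \<times> C \<and> snd v \<in> C \<times> C \<and> fst v = fst u + 1 \<and> snd (snd u) \<noteq> fst (snd v)"
  by (cases u; cases v) simp

lemma edges_colour_mismatch_digraph_subset:
  "edges (colour_mismatch_digraph C) \<subseteq>
     verts (colour_mismatch_digraph C) \<times> verts (colour_mismatch_digraph C)"
  by (auto simp: colour_mismatch_digraph_def edges_def verts_def)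

text \<open>The permutation g t acts on the gap between layers t and t + 1, i.e. simultaneously on the
out-colours of layer t and the in-colours of layer t + 1, so it preserves the relation b \<noteq> a'.\<close>

definition colour_shift :: "int \<Rightarrow> (int \<Rightarrow> 'c \<Rightarrow> 'c) \<Rightarrow> int \<times> 'c \<times> 'c \<Rightarrow> int \<times> 'c \<times> 'c" where
  "colour_shift s g = (\<lambda>(i, a, b). (i + s, g (i - 1) a, g i b))"

lemma colour_shift_automorphism:
  assumes g: "\<And>t. g t permutes C"
  shows "colour_shift s g \<in> automorphisms (colour_mismatch_digraph C)"
proof -
  have bij: "bij_betw (colour_shift s g) (UNIV \<times> C \<times> C) (UNIV \<times> C \<times> C)"
    by (rule bij_betw_byWitness
        [where f' = "\<lambda>(i, a, b). (i - s, inv (g (i - s - 1)) a, inv (g (i - s)) b)"])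
      (auto simp: colour_shift_def permutes_inverses[OF g] permutes_in_image[OF g]
        permutes_in_image[OF permutes_inv[OF g]])
  have "inj (g t)" for t using g by (rule permutes_inj)
  then have "(u, v) \<in> edges (colour_mismatch_digraph C) \<longleftrightarrow>
      (colour_shift s g u, colour_shift s g v) \<in> edges (colour_mismatch_digraph C)"
    if "u \<in> UNIV \<times> C \<times> C" "v \<in> UNIV \<times> C \<times> C" for u v
    using that by (auto simp: colour_shift_def permutes_in_image[OF g] inj_eq)
  with bij show ?thesis by (simp add: automorphisms_def)
qed

lemma exists_permutes_two_points:
  assumes "x1 \<in> C" "x2 \<in> C" "y1 \<in> C" "y2 \<in> C" "x1 = x2 \<longleftrightarrow> y1 = y2"
  shows "\<exists>p. p permutes C \<and> p x1 = y1 \<and> p x2 = y2"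
proof -
  define z where "z = transpose x1 y1 x2"
  have "z \<in> C" using assms by (auto simp: z_def transpose_def)
  then have "transpose z y2 \<circ> transpose x1 y1 permutes C"
    using assms by (intro permutes_compose permutes_swap_id)
  moreover have "z \<noteq> y1 \<or> x1 = x2"
    unfolding z_def by (metis transpose_apply_first transpose_eq_imp_eq)
  ultimately show ?thesis
    using assms by (intro exI[of _ "transpose z y2 \<circ> transpose x1 y1"]) (auto simp: z_def)
qed

lemma exists_gap_permutations:
  fixes a b a' b' :: "nat \<Rightarrow> 'c"
  assumes colours: "\<And>k. k \<le> n \<Longrightarrow> a k \<in> C \<and> b k \<in> C \<and> a' k \<in> C \<and> b' k \<in> C"
    and mismatch: "\<And>k. k < n \<Longrightarrow> b k \<noteq> a (Suc k) \<and> b' k \<noteq> a' (Suc k)"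
  obtains g where "\<And>t. g t permutes C"
    and "\<And>k. k \<le> n \<Longrightarrow> g (int k - 1) (a k) = a' k \<and> g (int k) (b k) = b' k"
proof -
  \<comment> \<open>The two colours prescribed on gap t; beyond the ends of the arc they are clamped to the
    single prescribed colour, so that both coincide there.\<close>
  define gap_out where "gap_out a b t = (if t < 0 then a 0 else b (min (nat t) n))"
    for a b :: "nat \<Rightarrow> 'c" and t :: int
  define gap_in where "gap_in a b t = (if t < int n then a (nat (t + 1)) else b n)"
    for a b :: "nat \<Rightarrow> 'c" and t :: int
  have "\<exists>p. p permutes C \<and>
      p (gap_out a b t) = gap_out a' b' t \<and> p (gap_in a b t) = gap_in a' b' t" for t
  proof (rule exists_permutes_two_points)
    show "gap_out a b t \<in> C" "gap_in a b t \<in> C" "gap_out a' b' t \<in> C" "gap_in a' b' t \<in> C"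
      using colours by (auto simp: gap_out_def gap_in_def)
    consider "t < 0" | "0 \<le> t" "t < int n" | "int n \<le> t" by linarith
    then show "gap_out a b t = gap_in a b t \<longleftrightarrow> gap_out a' b' t = gap_in a' b' t"
    proof cases
      case 1
      then have "nat (t + 1) = 0" by simp
      with 1 show ?thesis by (simp add: gap_out_def gap_in_def)
    next
      case 2
      then have "nat (t + 1) = Suc (nat t)" "nat t < n" by auto
      with 2 mismatch show ?thesis by (simp add: gap_out_def gap_in_def)
    next
      case 3
      then have "min (nat t) n = n" by simp
      with 3 show ?thesis by (simp add: gap_out_def gap_in_def)
    qed
  qed
  then obtain g where g: "\<And>t. g t permutes C"
    "\<And>t. g t (gap_out a b t) = gap_out a' b' t \<and> g t (gap_in a b t) = gap_in a' b' t"
    by metis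
  show thesis
  proof (rule that[OF g(1)])
    fix k assume "k \<le> n"
    then show "g (int k - 1) (a k) = a' k \<and> g (int k) (b k) = b' k"
      using g(2)[of "int k - 1"] g(2)[of "int k"] by (simp add: gap_out_def gap_in_def)
  qed
qed

lemma arcs_colour_mismatch_digraphE:
  assumes A: "A \<in> arcs (colour_mismatch_digraph C) n" and n: "0 < n"
  obtains i a b
  where "\<And>k. k \<le> n \<Longrightarrow> arc_vertex A k = (i + int k, a k, b k) \<and> a k \<in> C \<and> b k \<in> C"
    and "\<And>k. k < n \<Longrightarrow> b k \<noteq> a (Suc k)"
proof -
  define i a b where "i = fst (arc_vertex A 0)" and "a k = fst (snd (arc_vertex A k))"
    and "b k = snd (snd (arc_vertex A k))" for k
  have edge: "fst (arc_vertex A (Suc k)) = fst (arc_vertex A k) + 1 \<and> a k \<in> C \<and> b k \<in> C \<and>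
      a (Suc k) \<in> C \<and> b (Suc k) \<in> C \<and> b k \<noteq> a (Suc k)" if "k < n" for k
    using arcs_arc_vertex_edge[OF A that] unfolding edges_colour_mismatch_digraph a_def b_def
    by (simp add: mem_Times_iff)
  have "arc_vertex A k = (i + int k, a k, b k) \<and> a k \<in> C \<and> b k \<in> C" if "k \<le> n" for k
    using that
  proof (induction k)
    case 0
    have "arc_vertex A 0 = (i, a 0, b 0)" by (simp add: i_def a_def b_def)
    with edge[of 0] n show ?case by simp
  next
    case (Suc k)
    have "arc_vertex A (Suc k) = (fst (arc_vertex A (Suc k)), a (Suc k), b (Suc k))"
      by (simp add: a_def b_def)
    with Suc edge[of k] show ?case by simp
  qed
  moreover have "b k \<noteq> a (Suc k)" if "k < n" for k
    using edge[OF that] by simp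
  ultimately show thesis by (rule that)
qed

lemma highly_arc_transitive_colour_mismatch_digraph:
  assumes "c \<in> C" "c' \<in> C" "c \<noteq> c'"
  shows "highly_arc_transitive (colour_mismatch_digraph C)"
  unfolding highly_arc_transitive_def
proof (intro allI conjI ballI)
  fix n
  have "map (\<lambda>k. ((int k, c', c), (int k + 1, c', c))) [0..<n] \<in> arcs (colour_mismatch_digraph C) n"
    using assms by (simp add: arcs_def image_subset_iff)
  then show "arcs (colour_mismatch_digraph C) n \<noteq> {}" by blast
  fix A B
  assume A: "A \<in> arcs (colour_mismatch_digraph C) n" and B: "B \<in> arcs (colour_mismatch_digraph C) n"
  show "\<exists>f\<in>automorphisms (colour_mismatch_digraph C). map_arc f A = B"
  proof (cases "n = 0")
    case True
    then have "A = []" "B = []" using A B by (auto simp: arcs_def)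
    moreover have "id \<in> automorphisms (colour_mismatch_digraph C)" by (simp add: automorphisms_def)
    ultimately show ?thesis by auto
  next
    case False
    obtain i a b
      where vA: "\<And>k. k \<le> n \<Longrightarrow> arc_vertex A k = (i + int k, a k, b k) \<and> a k \<in> C \<and> b k \<in> C"
      and mA: "\<And>k. k < n \<Longrightarrow> b k \<noteq> a (Suc k)"
      using arcs_colour_mismatch_digraphE[OF A] False by blast
    obtain j a' b'
      where vB: "\<And>k. k \<le> n \<Longrightarrow> arc_vertex B k = (j + int k, a' k, b' k) \<and> a' k \<in> C \<and> b' k \<in> C"
      and mB: "\<And>k. k < n \<Longrightarrow> b' k \<noteq> a' (Suc k)"
      using arcs_colour_mismatch_digraphE[OF B] False by blast
    obtain g where g: "\<And>t. g t permutes C"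
      and gab: "\<And>k. k \<le> n \<Longrightarrow> g (int k - 1) (a k) = a' k \<and> g (int k) (b k) = b' k"
      using exists_gap_permutations[of n a C b a' b'] vA vB mA mB by blast
    define f where "f = colour_shift (j - i) (\<lambda>t. g (t - i))"
    have "f \<in> automorphisms (colour_mismatch_digraph C)"
      unfolding f_def using g by (rule colour_shift_automorphism)
    moreover have "map_arc f A = B"
    proof (rule map_arc_eqI[OF A B])
      fix k assume "k \<le> n"
      then show "f (arc_vertex A k) = arc_vertex B k"
        using vA vB gab by (simp add: f_def colour_shift_def algebra_simps)
    qed
    ultimately show ?thesis by blast
  qed
qed

lemma edges_layerwise_prod_iff:
  "(u, v) \<in> edges (layerwise_prod G1 p1 G2 p2) \<longleftrightarrow>
     u \<in> verts (layerwise_prod G1 p1 G2 p2) \<and> v \<in> verts (layerwise_prod G1 p1 G2 p2) \<and>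
     (fst u, fst v) \<in> edges G1 \<and> (snd u, snd v) \<in> edges G2"
  by (cases u; cases v) (simp add: layerwise_prod_def Let_def verts_def edges_def)

lemma edges_layerwise_prod_subset:
  "edges (layerwise_prod G1 p1 G2 p2) \<subseteq>
     verts (layerwise_prod G1 p1 G2 p2) \<times> verts (layerwise_prod G1 p1 G2 p2)"
  using edges_layerwise_prod_iff by fast

lemma verts_layerwise_prod_L:
  "verts (layerwise_prod L phi1 L phi2) =
     {((i, x), (j, y)). x \<in> {-1, 0, 1} \<and> y \<in> {-1, 0, 1} \<and> j = i - 1}"
  by (auto simp: layerwise_prod_def Let_def verts_def L_def phi1_def phi2_def)

lemma edges_L_iff:
  "((i, x), (j, y)) \<in> edges L \<longleftrightarrow>
     x \<in> {-1, 0, 1} \<and> y \<in> {-1, 0, 1} \<and> j = i + 1 \<and> (even i \<or> x + y \<noteq> 0)"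
  by (auto simp: L_def edges_def)

text \<open>Negating the label that restricts the entering edges turns the condition x + y \<noteq> 0 of L
into an inequality of colours.\<close>

definition decode_vertex :: "(int \<times> int) \<times> (int \<times> int) \<Rightarrow> int \<times> int \<times> int" where
  "decode_vertex = (\<lambda>((i, x), (_, y)). if even i then (i, - x, y) else (i, - y, x))"

definition encode_vertex :: "int \<times> int \<times> int \<Rightarrow> (int \<times> int) \<times> (int \<times> int)" where
  "encode_vertex =
     (\<lambda>(i, a, b). if even i then ((i, - a), (i - 1, b)) else ((i, b), (i - 1, - a)))"

lemma digraph_iso_decode_vertex:
  "digraph_iso decode_vertex (layerwise_prod L phi1 L phi2) (colour_mismatch_digraph {-1, 0, 1})"
proof -
  let ?V = "verts (layerwise_prod L phi1 L phi2)"
  have "bij_betw decode_vertex ?V (UNIV \<times> {-1, 0, 1} \<times> {-1, 0, 1})"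
  proof (rule bij_betw_byWitness[where f' = encode_vertex])
    show "decode_vertex ` ?V \<subseteq> UNIV \<times> {-1, 0, 1} \<times> {-1, 0, 1}"
    proof (rule image_subsetI)
      fix v assume "v \<in> ?V"
      then obtain i x y where "v = ((i, x), (i - 1, y))" "x \<in> {-1, 0, 1}" "y \<in> {-1, 0, 1}"
        by (auto simp: verts_layerwise_prod_L)
      then show "decode_vertex v \<in> UNIV \<times> {-1, 0, 1} \<times> {-1, 0, 1}"
        by (auto simp: decode_vertex_def)
    qed
  qed (auto simp: verts_layerwise_prod_L decode_vertex_def encode_vertex_def split: if_splits)
  moreover have "(u, v) \<in> edges (layerwise_prod L phi1 L phi2) \<longleftrightarrow>
      (decode_vertex u, decode_vertex v) \<in> edges (colour_mismatch_digraph {-1, 0, 1})"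
    if "u \<in> ?V" "v \<in> ?V" for u v
  proof -
    obtain i x y where u: "u = ((i, x), (i - 1, y))" "x \<in> {-1, 0, 1}" "y \<in> {-1, 0, 1}"
      using \<open>u \<in> ?V\<close> by (auto simp: verts_layerwise_prod_L)
    obtain i' x' y' where v: "v = ((i', x'), (i' - 1, y'))" "x' \<in> {-1, 0, 1}" "y' \<in> {-1, 0, 1}"
      using \<open>v \<in> ?V\<close> by (auto simp: verts_layerwise_prod_L)
    consider "i' = i + 1" "even i" | "i' = i + 1" "odd i" | "i' \<noteq> i + 1" by blast
    then show ?thesis
      using that u v
      by cases (auto simp: edges_layerwise_prod_iff edges_L_iff decode_vertex_def eq_neg_iff_add_eq_0)
  qed
  ultimately show ?thesis by (simp add: digraph_iso_def)
qed

theorem mainTheorem2: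
  shows "highly_arc_transitive (layerwise_prod L phi1 L phi2)"
proof (rule highly_arc_transitive_digraph_iso)
  show "highly_arc_transitive (colour_mismatch_digraph {-1, 0, 1 :: int})"
    by (rule highly_arc_transitive_colour_mismatch_digraph[of 0 _ 1]) auto
  show "digraph_iso (inv_into (verts (layerwise_prod L phi1 L phi2)) decode_vertex)
      (colour_mismatch_digraph {-1, 0, 1}) (layerwise_prod L phi1 L phi2)"
    by (rule digraph_iso_inv) (rule digraph_iso_decode_vertex)
qed (rule edges_colour_mismatch_digraph_subset edges_layerwise_prod_subset)+

end
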